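(* Let $n\ge 1$, let $A\in \mathrm{M}_n(E_0)$ and $B\in \mathrm{M}_n(E_1)$. Let \[p_A(x)=\det(xI_n-A)=\alpha_0+\alpha_1x+\cdots+\alpha_{n-1}x^{n-1}+\alpha_nx^n\in E_0[x]\] be the characteristic polynomial of $A$ (so $\alpha_n=1$). Define elements $\beta_0,\dots,\beta_n\in E_1$ by $\beta_n=0$ and, descending for $k=n-1,n-2,\dots,0$, \[\beta_k=\Big\{-\frac{1}{n-k}\sum_{i=1}^{n-k}\beta_{k+i}\,\mathrm{tr}(A^i)\Big\}+\Big\{-\frac{1}{n-k}\sum_{\substack{r+s\le n-k-1\\ r,s\ge 0}}\alpha_{k+r+s+1}\,\mathrm{tr}(A^rBA^s)\Big\}.\] Then \[\beta_0I_n+\sum_{k=1}^{n}\Big\{\beta_kA^k+\alpha_k\big(A^{k-1}B+A^{k-2}BA+\cdots+ABA^{k-2}+BA^{k-1}\big)\Big\}=0,\] where $I_n$ is the $n\times n$ identity matrix.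
   Context: $K$ is a field of characteristic zero. $E$ is the infinite-dimensional Grassmann (exterior) algebra over $K$, generated by countably many indeterminates $v_1,v_2,\dots$ subject to $v_iv_j+v_jv_i=0$ for all $i,j$ (so $v_i^2=0$). $E=E_0\oplus E_1$ is its natural $\mathbb{Z}_2$-grading: $E_0$ (resp. $E_1$) is the $K$-span of products of an even (resp. odd) number of generators; $E_0$ is commutative and central in $E$. $\mathrm{M}_n(R)$ denotes the algebra of $n\times n$ matrices over $R$. For a matrix $M$ over $E$, $\mathrm{tr}(M)$ is the sum of its diagonal entries. Since $E_0$ is commutative, $\det(xI_n-A)$ for $A\in\mathrm{M}_n(E_0)$ is the usual determinant over the commutative ring $E_0[x]$. $A^0=I_n$. *)

theory Defs
  imports Main "HOL-Library.Function_Algebras" "HOL-Combinatorics.Permutations"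
begin

text \<open>The infinite Grassmann algebra E over a field K (type 'k, char 0), in its standard
  basis description: an element is a K-linear combination of the monomials
  v_{i1} v_{i2} ... v_{im} with i1 < ... < im, i.e. a finitely supported function from
  finite sets of indices to K.
  The product of basis monomials is v_T v_U = 0 if T, U meet, and otherwise
  (-1)^(number of pairs t in T, u in U with u < t) times v_(T union U).\<close>

type_synonym 'k grass = "nat set \<Rightarrow> 'k"

definition gsign :: "nat set \<Rightarrow> nat set \<Rightarrow> 'k::comm_ring_1" where
  "gsign T U = (-1) ^ card {(t, u). t \<in> T \<and> u \<in> U \<and> u < t}"

definition gmul :: "'k::comm_ring_1 grass \<Rightarrow> 'k grass \<Rightarrow> 'k grass" where
  "gmul f g = (\<lambda>S. if finite S then (\<Sum>T\<in>Pow S. gsign T (S - T) * f T * g (S - T)) else 0)"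

definition gone :: "'k::comm_ring_1 grass" where
  "gone = (\<lambda>S. if S = {} then 1 else 0)"

definition gen :: "nat \<Rightarrow> 'k::comm_ring_1 grass" where
  "gen i = (\<lambda>S. if S = {i} then 1 else 0)"

definition gscale :: "'k::comm_ring_1 \<Rightarrow> 'k grass \<Rightarrow> 'k grass" where
  "gscale c f = (\<lambda>S. c * f S)"

definition Grass :: "'k::comm_ring_1 grass set" where
  "Grass = {f. finite {S. f S \<noteq> 0} \<and> (\<forall>S. f S \<noteq> 0 \<longrightarrow> finite S)}"

definition Grass0 :: "'k::comm_ring_1 grass set" where
  "Grass0 = {f \<in> Grass. \<forall>S. f S \<noteq> 0 \<longrightarrow> even (card S)}"

definition Grass1 :: "'k::comm_ring_1 grass set" where
  "Grass1 = {f \<in> Grass. \<forall>S. f S \<noteq> 0 \<longrightarrow> odd (card S)}"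

text \<open>n x n matrices over E, represented as functions nat => nat => E;
  only the entries with indices < n are meaningful.\<close>
type_synonym 'k gmat = "nat \<Rightarrow> nat \<Rightarrow> 'k grass"

definition mmul :: "nat \<Rightarrow> 'k::comm_ring_1 gmat \<Rightarrow> 'k gmat \<Rightarrow> 'k gmat" where
  "mmul n M N = (\<lambda>i j. \<Sum>l<n. gmul (M i l) (N l j))"

definition mone :: "'k::comm_ring_1 gmat" where
  "mone = (\<lambda>i j. if i = j then gone else 0)"

primrec mpow :: "nat \<Rightarrow> 'k::comm_ring_1 gmat \<Rightarrow> nat \<Rightarrow> 'k gmat" where
  "mpow n M 0 = mone"
| "mpow n M (Suc k) = mmul n (mpow n M k) M"

definition mtrace :: "nat \<Rightarrow> 'k::comm_ring_1 gmat \<Rightarrow> 'k grass" where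
  "mtrace n M = (\<Sum>i<n. M i i)"

definition msmul :: "'k::comm_ring_1 grass \<Rightarrow> 'k gmat \<Rightarrow> 'k gmat" where
  "msmul c M = (\<lambda>i j. gmul c (M i j))"

text \<open>Polynomials in x over E_0, as coefficient sequences (coefficient of x^k at k).\<close>
type_synonym 'k gpoly = "nat \<Rightarrow> 'k grass"

definition pmul :: "'k::comm_ring_1 gpoly \<Rightarrow> 'k gpoly \<Rightarrow> 'k gpoly" where
  "pmul p q = (\<lambda>k. \<Sum>j\<le>k. gmul (p j) (q (k - j)))"

definition pone :: "'k::comm_ring_1 gpoly" where
  "pone = (\<lambda>k. if k = 0 then gone else 0)"

definition xIminus :: "'k::comm_ring_1 gmat \<Rightarrow> nat \<Rightarrow> nat \<Rightarrow> 'k gpoly" where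
  "xIminus A i j = (\<lambda>k. if k = 0 then - A i j else if k = 1 then (if i = j then gone else 0) else 0)"

text \<open>characteristic polynomial det(x I_n - A), by the Leibniz formula (meaningful for A over
  the commutative ring E_0); charpoly n A k is the coefficient alpha_k of x^k.\<close>
definition charpoly :: "nat \<Rightarrow> 'k::comm_ring_1 gmat \<Rightarrow> 'k gpoly" where
  "charpoly n A = (\<Sum>\<sigma>\<in>{\<sigma>. \<sigma> permutes {..<n}}.
      (\<lambda>k. gscale (of_int (sign \<sigma>))
              (foldr (\<lambda>i acc. pmul (xIminus A i (\<sigma> i)) acc) [0..<n] pone k)))"

end

theory Submission
  imports Defs "Jordan_Normal_Form.Char_Poly" "HOL-Library.Poly_Mapping"
begin

text \<open>Adjoin to E an infinitesimal \<epsilon> with \<epsilon>^2 = 0 and consider C = A + \<epsilon> B. Since B enters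
  only linearly and the entries of A are even, hence central, the entries of C live in the
  commutative ring E_0 + \<epsilon> E, so the Cayley-Hamilton theorem and Newton's identities
  (n - k) c_k + \<Sum>_i c_(k+i) tr(C^i) = 0 hold for the characteristic polynomial \<Sum>_k c_k x^k of C.
  The \<epsilon>-part of C^k is A^(k-1) B + ... + B A^(k-1), the non-\<epsilon> part of c_k is \<alpha>_k, and the
  \<epsilon>-part of Newton's identities is exactly the recursion defining \<beta>. Hence \<beta>_k is the
  \<epsilon>-part of c_k, and the \<epsilon>-part of Cayley-Hamilton for C is the claimed identity.\<close>

section \<open>The Grassmann algebra\<close>

definition supported_on :: "(nat set \<Rightarrow> bool) \<Rightarrow> 'k::zero grass \<Rightarrow> bool" where
  "supported_on P f \<longleftrightarrow> (\<forall>S. f S \<noteq> 0 \<longrightarrow> P S)"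

abbreviation gfinite :: "'k::zero grass \<Rightarrow> bool" where
  "gfinite \<equiv> supported_on finite"

abbreviation geven :: "'k::zero grass \<Rightarrow> bool" where
  "geven \<equiv> supported_on (\<lambda>S. finite S \<and> even (card S))"

lemma supported_onD: "supported_on P f \<Longrightarrow> f S \<noteq> 0 \<Longrightarrow> P S"
  by (simp add: supported_on_def)

lemma supported_on_0 [simp]: "supported_on P 0"
  by (simp add: supported_on_def)

lemma supported_on_combine:
  assumes "supported_on P f" "supported_on P g" "\<And>S. f S = 0 \<Longrightarrow> g S = 0 \<Longrightarrow> h S = 0"
  shows "supported_on P h"
  using assms unfolding supported_on_def by blast

lemma supported_on_add:
  "supported_on P (f :: 'k::comm_ring_1 grass) \<Longrightarrow> supported_on P g \<Longrightarrow> supported_on P (f + g)"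
  by (rule supported_on_combine[of P f g]) auto

lemma supported_on_uminus: "supported_on P (f :: 'k::comm_ring_1 grass) \<Longrightarrow> supported_on P (- f)"
  by (simp add: supported_on_def)

lemma supported_on_diff:
  "supported_on P (f :: 'k::comm_ring_1 grass) \<Longrightarrow> supported_on P g \<Longrightarrow> supported_on P (f - g)"
  by (rule supported_on_combine[of P f g]) auto

lemma supported_on_sum:
  "(\<And>i. i \<in> I \<Longrightarrow> supported_on P (f i :: 'k::comm_ring_1 grass)) \<Longrightarrow> supported_on P (\<Sum>i\<in>I. f i)"
  by (induct I rule: infinite_finite_induct) (auto intro: supported_on_add)

lemma geven_imp_gfinite: "geven f \<Longrightarrow> gfinite f"
  by (simp add: supported_on_def)

definition inversions :: "nat set \<Rightarrow> nat set \<Rightarrow> (nat \<times> nat) set" where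
  "inversions T U = {(t, u). t \<in> T \<and> u \<in> U \<and> u < t}"

lemma gsign_inversions: "gsign T U = (-1) ^ card (inversions T U)"
  by (simp add: gsign_def inversions_def)

lemma finite_inversions: "finite T \<Longrightarrow> finite U \<Longrightarrow> finite (inversions T U)"
  by (rule finite_subset[of _ "T \<times> U"]) (auto simp: inversions_def)

lemma gsign_Un_left:
  assumes "finite T" "finite V" "finite W" "T \<inter> V = {}"
  shows "(gsign (T \<union> V) W :: 'k::comm_ring_1) = gsign T W * gsign V W"
proof -
  have "inversions (T \<union> V) W = inversions T W \<union> inversions V W"
    and "inversions T W \<inter> inversions V W = {}"
    using assms(4) by (auto simp: inversions_def)
  then have "card (inversions (T \<union> V) W) = card (inversions T W) + card (inversions V W)"
    using assms by (simp add: card_Un_disjoint finite_inversions)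
  then show ?thesis by (simp add: gsign_inversions power_add)
qed

lemma gsign_Un_right:
  assumes "finite T" "finite V" "finite W" "V \<inter> W = {}"
  shows "(gsign T (V \<union> W) :: 'k::comm_ring_1) = gsign T V * gsign T W"
proof -
  have "inversions T (V \<union> W) = inversions T V \<union> inversions T W"
    and "inversions T V \<inter> inversions T W = {}"
    using assms(4) by (auto simp: inversions_def)
  then have "card (inversions T (V \<union> W)) = card (inversions T V) + card (inversions T W)"
    using assms by (simp add: card_Un_disjoint finite_inversions)
  then show ?thesis by (simp add: gsign_inversions power_add)
qed

lemma gsign_mult_self: "(gsign T U :: 'k::comm_ring_1) * gsign T U = 1"
  by (simp add: gsign_def flip: power_add)

text \<open>Every pair in T \<times> U is an inversion of exactly one of the two orders.\<close>
lemma gsign_swap: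
  assumes "finite T" "finite U" "T \<inter> U = {}"
  shows "(gsign T U :: 'k::comm_ring_1) * gsign U T = (-1) ^ (card T * card U)"
proof -
  have "inversions T U \<union> prod.swap ` inversions U T = T \<times> U"
    using assms(3) by (auto simp: inversions_def image_iff)
  moreover have "inversions T U \<inter> prod.swap ` inversions U T = {}"
    by (auto simp: inversions_def)
  moreover have "card (prod.swap ` inversions U T) = card (inversions U T)"
    by (rule card_image) (auto simp: inj_on_def)
  ultimately have "card (inversions T U) + card (inversions U T) = card T * card U"
    using assms by (metis card_Un_disjoint card_cartesian_product finite_inversions finite_imageI)
  then show ?thesis by (simp add: gsign_inversions flip: power_add)
qed

lemma gsign_commute_even:
  assumes "finite T" "finite U" "T \<inter> U = {}" "even (card T)"
  shows "(gsign U T :: 'k::comm_ring_1) = gsign T U"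
proof -
  have "(gsign T U :: 'k) * gsign U T = 1" using gsign_swap[OF assms(1-3)] assms(4) by simp
  then have "(gsign T U :: 'k) * (gsign T U * gsign U T) = gsign T U" by simp
  then show ?thesis by (simp add: mult.assoc[symmetric] gsign_mult_self)
qed

lemma gsign_assoc:
  assumes "T \<subseteq> U" "U \<subseteq> S" "finite S"
  shows "(gsign T (U - T) :: 'k::comm_ring_1) * gsign U (S - U)
    = gsign (U - T) (S - U) * gsign T (S - T)"
proof -
  have "finite U" using assms(2,3) by (rule finite_subset)
  then have fins: "finite T" "finite (U - T)" "finite (S - U)"
    using assms(1,3) finite_subset by auto
  have "(gsign U (S - U) :: 'k) = gsign T (S - U) * gsign (U - T) (S - U)"
    using gsign_Un_left[OF fins] assms by (simp add: Un_absorb1)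
  moreover have "U - T \<union> (S - U) = S - T" "(U - T) \<inter> (S - U) = {}"
    using assms by auto
  then have "(gsign T (S - T) :: 'k) = gsign T (U - T) * gsign T (S - U)"
    using gsign_Un_right[OF fins] by simp
  ultimately show ?thesis by (simp add: ac_simps)
qed

lemma gmul_finite: "finite S \<Longrightarrow> gmul f g S = (\<Sum>T\<in>Pow S. gsign T (S - T) * f T * g (S - T))"
  by (simp add: gmul_def)

lemma gmul_infinite: "infinite S \<Longrightarrow> gmul f g S = 0"
  by (simp add: gmul_def)

lemma gfinite_gmul: "gfinite (gmul f g)"
  by (simp add: supported_on_def gmul_def)

lemma gmul_assoc:
  fixes f g h :: "'k::comm_ring_1 grass"
  shows "gmul (gmul f g) h = gmul f (gmul g h)"
proof
  fix S :: "nat set"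
  show "gmul (gmul f g) h S = gmul f (gmul g h) S"
  proof (cases "finite S")
    case False
    then show ?thesis by (simp add: gmul_infinite)
  next
    case fin: True
    have fin_sub: "finite U" if "U \<subseteq> S" for U
      using fin that by (rule finite_subset[rotated])
    have "gmul (gmul f g) h S = (\<Sum>(U, T)\<in>(SIGMA U:Pow S. Pow U).
        gsign U (S - U) * gsign T (U - T) * f T * g (U - T) * h (S - U))"
      by (simp add: gmul_finite[OF fin] gmul_finite[OF fin_sub] sum_distrib_left sum_distrib_right
          mult.assoc sum.Sigma fin fin_sub)
    also have "\<dots> = (\<Sum>(T, V)\<in>(SIGMA T:Pow S. Pow (S - T)).
        gsign T (S - T) * gsign V (S - T - V) * f T * g V * h (S - T - V))"
    proof (rule sum.reindex_bij_witness[where i = "\<lambda>(T, V). (T \<union> V, T)" and j = "\<lambda>(U, T). (T, U - T)"])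
      fix a assume "a \<in> (SIGMA U:Pow S. Pow U)"
      then obtain U T where a: "a = (U, T)" and TU: "T \<subseteq> U" "U \<subseteq> S" by auto
      have "(gsign T (U - T) :: 'k) * gsign U (S - U) = gsign (U - T) (S - U) * gsign T (S - T)"
        using TU fin by (rule gsign_assoc)
      moreover have "S - T - (U - T) = S - U" using TU by auto
      ultimately show "(case (\<lambda>(U, T). (T, U - T)) a of (T, V) \<Rightarrow>
          gsign T (S - T) * gsign V (S - T - V) * f T * g V * h (S - T - V)) =
        (case a of (U, T) \<Rightarrow> gsign U (S - U) * gsign T (U - T) * f T * g (U - T) * h (S - U))"
        by (simp add: a ac_simps)
    qed (auto simp: Un_absorb1)
    also have "\<dots> = gmul f (gmul g h) S"
      by (simp add: gmul_finite[OF fin] gmul_finite sum_distrib_left sum_distrib_right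
          ac_simps sum.Sigma fin)
    finally show ?thesis .
  qed
qed

lemma gmul_commute_even:
  fixes f g :: "'k::comm_ring_1 grass"
  assumes "geven f"
  shows "gmul f g = gmul g f"
proof
  fix S :: "nat set"
  show "gmul f g S = gmul g f S"
  proof (cases "finite S")
    case False
    then show ?thesis by (simp add: gmul_infinite)
  next
    case fin: True
    show ?thesis unfolding gmul_finite[OF fin]
    proof (rule sum.reindex_bij_witness[where i = "\<lambda>T. S - T" and j = "\<lambda>T. S - T"])
      fix T assume T: "T \<in> Pow S"
      show "gsign (S - T) (S - (S - T)) * g (S - T) * f (S - (S - T))
        = gsign T (S - T) * f T * g (S - T)"
      proof (cases "f T = 0")
        case False
        then have "even (card T)" using assms by (auto dest: supported_onD)
        moreover have "finite T" "finite (S - T)" using T fin finite_subset by auto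
        ultimately have "(gsign (S - T) T :: 'k) = gsign T (S - T)"
          by (intro gsign_commute_even) auto
        then show ?thesis using T by (simp add: double_diff ac_simps)
      qed (use T in \<open>simp add: double_diff\<close>)
    qed auto
  qed
qed

lemma gmul_add_left: "gmul (f + g) h = gmul f h + gmul (g :: 'k::comm_ring_1 grass) h"
  by (rule ext) (simp add: gmul_def algebra_simps sum.distrib)

lemma gmul_add_right: "gmul h (f + g) = gmul h f + gmul (h :: 'k::comm_ring_1 grass) g"
  by (rule ext) (simp add: gmul_def algebra_simps sum.distrib)

lemma gmul_0_left [simp]: "gmul 0 (h :: 'k::comm_ring_1 grass) = 0"
  by (rule ext) (simp add: gmul_def)

lemma gmul_0_right [simp]: "gmul (h :: 'k::comm_ring_1 grass) 0 = 0"
  by (rule ext) (simp add: gmul_def)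

lemma gmul_sum_left: "gmul (\<Sum>i\<in>I. f i) h = (\<Sum>i\<in>I. gmul (f i) (h :: 'k::comm_ring_1 grass))"
proof (induct I rule: infinite_finite_induct)
  case (insert i I)
  then show ?case by (simp only: sum.insert[OF insert(1,2)] gmul_add_left insert(3))
qed (metis sum.infinite sum.empty gmul_0_left)+

lemma gmul_sum_right: "gmul h (\<Sum>i\<in>I. f i) = (\<Sum>i\<in>I. gmul (h :: 'k::comm_ring_1 grass) (f i))"
proof (induct I rule: infinite_finite_induct)
  case (insert i I)
  then show ?case by (simp only: sum.insert[OF insert(1,2)] gmul_add_right insert(3))
qed (metis sum.infinite sum.empty gmul_0_right)+

lemma gmul_gscale_left: "gmul (gscale c f) h = gscale c (gmul f (h :: 'k::comm_ring_1 grass))"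
  by (rule ext) (simp add: gmul_def gscale_def sum_distrib_left ac_simps)

lemma geven_gone: "geven (gone :: 'k::comm_ring_1 grass)"
  by (simp add: supported_on_def gone_def)

lemma gmul_gone_left: "gfinite f \<Longrightarrow> gmul gone f = (f :: 'k::comm_ring_1 grass)"
proof
  fix S assume f: "gfinite f"
  show "gmul gone f S = f S"
  proof (cases "finite S")
    case False
    then show ?thesis using f by (auto simp: gmul_infinite dest: supported_onD)
  next
    case True
    have "gmul gone f S = (\<Sum>T\<in>Pow S. if T = {} then gsign T (S - T) * f (S - T) else 0)"
      unfolding gmul_finite[OF True] by (rule sum.cong) (auto simp: gone_def)
    then show ?thesis using True by (simp add: gsign_def)
  qed
qed

lemma geven_gmul:
  fixes f g :: "'k::comm_ring_1 grass"
  assumes f: "geven f" and g: "geven g"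
  shows "geven (gmul f g)"
  unfolding supported_on_def
proof (intro allI impI)
  fix S assume ne: "gmul f g S \<noteq> 0"
  then have fin: "finite S" by (metis gmul_infinite)
  from ne obtain T where "T \<in> Pow S" "gsign T (S - T) * f T * g (S - T) \<noteq> 0"
    unfolding gmul_finite[OF fin] by (rule sum.not_neutral_contains_not_neutral)
  then have T: "T \<subseteq> S" "f T \<noteq> 0" "g (S - T) \<noteq> 0" by auto
  then have "even (card T)" "even (card (S - T))"
    using f g by (auto dest: supported_onD)
  moreover have "card S = card T + card (S - T)"
    using T(1) fin by (metis card_Diff_subset card_mono finite_subset le_add_diff_inverse)
  ultimately show "finite S \<and> even (card S)" using fin by simp
qed

section \<open>Dual numbers over the Grassmann algebra\<close>

text \<open>Dual numbers r + \<epsilon> m (\<epsilon>^2 = 0) with r even. Since even elements are central, they form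
  a commutative ring although E is not commutative. Both parts must vanish on infinite index sets,
  where gmul is identically zero, for 1 to be neutral.\<close>

typedef (overloaded) 'k::comm_ring_1 grass_dual = "{(r :: 'k grass, m :: 'k grass). geven r \<and> gfinite m}"
  morphisms rep_dual Abs_dual
  by (rule exI[of _ "(0, 0)"]) simp

definition dual_re :: "'k::comm_ring_1 grass_dual \<Rightarrow> 'k grass" where
  "dual_re x = fst (rep_dual x)"

definition dual_eps :: "'k::comm_ring_1 grass_dual \<Rightarrow> 'k grass" where
  "dual_eps x = snd (rep_dual x)"

definition Dual :: "'k::comm_ring_1 grass \<Rightarrow> 'k grass \<Rightarrow> 'k grass_dual" where
  "Dual r m = Abs_dual (r, m)"

lemma geven_dual_re: "geven (dual_re x)"
  and gfinite_dual_eps: "gfinite (dual_eps x)"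
  using rep_dual[of x] by (auto simp: dual_re_def dual_eps_def)

lemma gfinite_dual_re: "gfinite (dual_re x)"
  using geven_dual_re by (rule geven_imp_gfinite)

lemma dual_eq_iff: "x = y \<longleftrightarrow> dual_re x = dual_re y \<and> dual_eps x = dual_eps y"
  by (metis dual_eps_def dual_re_def prod.expand rep_dual_inject)

lemma dual_re_Dual [simp]: "geven r \<Longrightarrow> gfinite m \<Longrightarrow> dual_re (Dual r m) = r"
  and dual_eps_Dual [simp]: "geven r \<Longrightarrow> gfinite m \<Longrightarrow> dual_eps (Dual r m) = m"
  by (simp_all add: dual_re_def dual_eps_def Dual_def Abs_dual_inverse)

instantiation grass_dual :: (comm_ring_1) comm_ring_1
begin

definition "0 = Dual 0 0"
definition "1 = Dual gone 0"
definition "x + y = Dual (dual_re x + dual_re y) (dual_eps x + dual_eps y)"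
definition "- x = Dual (- dual_re x) (- dual_eps x)"
definition "x - y = Dual (dual_re x - dual_re y) (dual_eps x - dual_eps y)"
definition "x * y = Dual (gmul (dual_re x) (dual_re y))
  (gmul (dual_re x) (dual_eps y) + gmul (dual_re y) (dual_eps x))"

lemma dual_re_0 [simp]: "dual_re (0 :: 'a grass_dual) = 0"
  and dual_eps_0 [simp]: "dual_eps (0 :: 'a grass_dual) = 0"
  by (simp_all add: zero_grass_dual_def)

lemma dual_re_1 [simp]: "dual_re (1 :: 'a grass_dual) = gone"
  and dual_eps_1 [simp]: "dual_eps (1 :: 'a grass_dual) = 0"
  by (simp_all add: one_grass_dual_def geven_gone)

lemma dual_re_add [simp]: "dual_re (x + y) = dual_re x + dual_re y"
  and dual_eps_add [simp]: "dual_eps (x + y) = dual_eps x + dual_eps y"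
  by (simp_all add: plus_grass_dual_def supported_on_add geven_dual_re gfinite_dual_eps)

lemma dual_re_uminus [simp]: "dual_re (- x) = - dual_re x"
  and dual_eps_uminus [simp]: "dual_eps (- x) = - dual_eps x"
  by (simp_all add: uminus_grass_dual_def supported_on_uminus geven_dual_re gfinite_dual_eps)

lemma dual_re_diff [simp]: "dual_re (x - y) = dual_re x - dual_re y"
  and dual_eps_diff [simp]: "dual_eps (x - y) = dual_eps x - dual_eps y"
  by (simp_all add: minus_grass_dual_def supported_on_diff geven_dual_re gfinite_dual_eps)

lemma dual_re_mult [simp]: "dual_re (x * y) = gmul (dual_re x) (dual_re y)"
  and dual_eps_mult [simp]:
    "dual_eps (x * y) = gmul (dual_re x) (dual_eps y) + gmul (dual_re y) (dual_eps x)"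
  by (simp_all add: times_grass_dual_def geven_gmul supported_on_add gfinite_gmul geven_dual_re)

instance
proof
  fix a b c :: "'a grass_dual"
  have commute_re: "gmul (dual_re x) f = gmul f (dual_re x)" for x :: "'a grass_dual" and f
    by (rule gmul_commute_even[OF geven_dual_re])
  have "dual_eps (a * b * c) = gmul (gmul (dual_re a) (dual_re b)) (dual_eps c)
      + gmul (dual_re c) (gmul (dual_re a) (dual_eps b))
      + gmul (dual_re c) (gmul (dual_re b) (dual_eps a))"
    by (simp add: gmul_add_right add.assoc)
  also have "\<dots> = gmul (dual_re a) (gmul (dual_re b) (dual_eps c))
      + gmul (dual_re a) (gmul (dual_re c) (dual_eps b))
      + gmul (gmul (dual_re b) (dual_re c)) (dual_eps a)"
    by (simp only: gmul_assoc[symmetric] commute_re[of c "dual_re a"] commute_re[of c "dual_re b"])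
  also have "\<dots> = dual_eps (a * (b * c))"
    by (simp add: gmul_add_right add.assoc)
  finally show "a * b * c = a * (b * c)"
    by (simp add: dual_eq_iff gmul_assoc)
  show "a * b = b * a"
    by (simp add: dual_eq_iff commute_re[of a "dual_re b"] add.commute)
  show "1 * a = a" by (simp add: dual_eq_iff gmul_gone_left gfinite_dual_re gfinite_dual_eps)
  show "a + b + c = a + (b + c)" by (simp add: dual_eq_iff add.assoc)
  show "a + b = b + a" by (simp add: dual_eq_iff add.commute)
  show "0 + a = a" by (simp add: dual_eq_iff)
  show "- a + a = 0" by (simp add: dual_eq_iff)
  show "a - b = a + - b" by (simp add: dual_eq_iff)
  show "(a + b) * c = a * c + b * c"
    by (simp add: dual_eq_iff gmul_add_left gmul_add_right add_ac)
  have "(0 :: 'a grass) {} \<noteq> gone {}" by (simp add: gone_def)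
  then show "(0 :: 'a grass_dual) \<noteq> 1" by (auto simp: dual_eq_iff)
qed

end

lemma dual_re_sum: "dual_re (\<Sum>t\<in>T. f t) = (\<Sum>t\<in>T. dual_re (f t))"
  and dual_eps_sum: "dual_eps (\<Sum>t\<in>T. f t) = (\<Sum>t\<in>T. dual_eps (f t))"
  by (induct T rule: infinite_finite_induct) simp_all

lemma dual_re_of_int: "dual_re (of_int z :: 'k::comm_ring_1 grass_dual) = gscale (of_int z) gone"
  and dual_eps_of_int: "dual_eps (of_int z :: 'k::comm_ring_1 grass_dual) = 0"
proof (induct z rule: int_induct[of _ 0])
  case base
  show "dual_re (of_int 0 :: 'k grass_dual) = gscale (of_int 0) gone"
    "dual_eps (of_int 0 :: 'k grass_dual) = 0"
    by (simp_all add: gscale_def zero_fun_def)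
next
  case (step1 z)
  then show "dual_re (of_int (z + 1) :: 'k grass_dual) = gscale (of_int (z + 1)) gone"
    "dual_eps (of_int (z + 1) :: 'k grass_dual) = 0"
    by (simp_all add: gscale_def fun_eq_iff algebra_simps)
next
  case (step2 z)
  then show "dual_re (of_int (z - 1) :: 'k grass_dual) = gscale (of_int (z - 1)) gone"
    "dual_eps (of_int (z - 1) :: 'k grass_dual) = 0"
    by (simp_all add: gscale_def fun_eq_iff algebra_simps)
qed

lemma dual_eps_of_int_mult: "dual_eps (of_int z * x) = gscale (of_int z) (dual_eps x)"
  by (simp add: dual_re_of_int dual_eps_of_int gmul_gscale_left gmul_gone_left
      gfinite_dual_re gfinite_dual_eps)

section \<open>Jacobi's formula over commutative rings\<close>

text \<open>The library proves Jacobi's formula (the derivative of the characteristic polynomial is the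
  sum of the characteristic polynomials of the principal minors) only over integral domains.
  Being a polynomial identity in the entries, it transfers to any commutative ring from the
  generic matrix over the domain \<int>[x_0, x_1, ...].\<close>

type_synonym zmpoly = "(nat \<Rightarrow>\<^sub>0 nat) \<Rightarrow>\<^sub>0 int"

definition monom_eval :: "(nat \<Rightarrow> 'a::comm_ring_1) \<Rightarrow> (nat \<Rightarrow>\<^sub>0 nat) \<Rightarrow> 'a" where
  "monom_eval a m = (\<Prod>v\<in>Poly_Mapping.keys m. a v ^ Poly_Mapping.lookup m v)"

definition zmpoly_eval :: "(nat \<Rightarrow> 'a::comm_ring_1) \<Rightarrow> zmpoly \<Rightarrow> 'a" where
  "zmpoly_eval a p = (\<Sum>m\<in>Poly_Mapping.keys p. of_int (Poly_Mapping.lookup p m) * monom_eval a m)"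

lemma monom_eval_superset:
  "finite V \<Longrightarrow> Poly_Mapping.keys m \<subseteq> V \<Longrightarrow> monom_eval a m = (\<Prod>v\<in>V. a v ^ Poly_Mapping.lookup m v)"
  unfolding monom_eval_def by (rule prod.mono_neutral_left) (auto simp: in_keys_iff)

lemma monom_eval_add: "monom_eval a (m + m') = monom_eval a m * monom_eval a m'"
proof -
  let ?V = "Poly_Mapping.keys m \<union> Poly_Mapping.keys m'"
  have "Poly_Mapping.keys (m + m') \<subseteq> ?V" by (rule keys_add)
  then show ?thesis
    by (simp add: monom_eval_superset[of ?V] lookup_add power_add prod.distrib)
qed

lemma zmpoly_eval_superset:
  "finite M \<Longrightarrow> Poly_Mapping.keys p \<subseteq> M \<Longrightarrow>
    zmpoly_eval a p = (\<Sum>m\<in>M. of_int (Poly_Mapping.lookup p m) * monom_eval a m)"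
  unfolding zmpoly_eval_def by (rule sum.mono_neutral_left) (auto simp: in_keys_iff)

lemma zmpoly_eval_diff: "zmpoly_eval a (p - q) = zmpoly_eval a p - zmpoly_eval a q"
proof -
  let ?M = "Poly_Mapping.keys p \<union> Poly_Mapping.keys q"
  have "Poly_Mapping.keys (p - q) \<subseteq> ?M" by (rule keys_diff)
  then show ?thesis
    by (simp add: zmpoly_eval_superset[of ?M] lookup_minus algebra_simps sum_subtractf)
qed

lemma zmpoly_eval_0 [simp]: "zmpoly_eval a 0 = 0"
  by (simp add: zmpoly_eval_def)

lemma zmpoly_eval_monom [simp]: "zmpoly_eval a (frag_of m) = monom_eval a m"
  by (simp add: zmpoly_eval_def)

lemma zmpoly_eval_mult: "zmpoly_eval a (p * q) = zmpoly_eval a p * zmpoly_eval a q"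
proof (induction p arbitrary: q rule: frag_induction[OF subset_UNIV])
  case (2 m)
  show ?case
  proof (induction q rule: frag_induction[OF subset_UNIV])
    case (2 m')
    then show ?case by (simp add: mult_single monom_eval_add)
  qed (simp_all add: right_diff_distrib zmpoly_eval_diff)
qed (simp_all add: left_diff_distrib zmpoly_eval_diff)

interpretation zmpoly_eval: comm_ring_hom "zmpoly_eval a"
proof
  fix p q :: zmpoly
  have "p + q = p - (0 - q)" by simp
  then show "zmpoly_eval a (p + q) = zmpoly_eval a p + zmpoly_eval a q"
    by (metis diff_0 diff_minus_eq_add zmpoly_eval_0 zmpoly_eval_diff)
  show "zmpoly_eval a (p * q) = zmpoly_eval a p * zmpoly_eval a q" by (rule zmpoly_eval_mult)
  show "zmpoly_eval a 1 = 1" by (simp add: zmpoly_eval_def monom_eval_def lookup_one)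
qed simp

definition zmvar :: "nat \<Rightarrow> zmpoly" where
  "zmvar v = frag_of (Poly_Mapping.single v 1)"

lemma zmpoly_eval_zmvar [simp]: "zmpoly_eval a (zmvar v) = a v"
  by (simp add: zmvar_def monom_eval_def)

lemma map_mat_mat_delete:
  "map_mat f (mat_delete C i j) = mat_delete (map_mat f C) i j"
  by (rule eq_matI) (auto simp: mat_delete_def)

lemma coeff_sum_char_poly_mat_delete_idom:
  fixes C :: "'a::idom mat"
  assumes "C \<in> carrier_mat n n"
  shows "coeff (\<Sum>i<n. char_poly (mat_delete C i i)) k = of_nat (Suc k) * coeff (char_poly C) (Suc k)"
  by (simp add: pderiv_char_poly[OF assms, symmetric] coeff_pderiv)

lemma generic_matE:
  fixes C :: "'a::comm_ring_1 mat"
  assumes C: "C \<in> carrier_mat n n"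
  obtains X :: "zmpoly mat" and a where "X \<in> carrier_mat n n" "C = map_mat (zmpoly_eval a) X"
proof -
  define X where "X = mat n n (\<lambda>(i, j). zmvar (i * n + j))"
  define a where "a = (\<lambda>v. C $$ (v div n, v mod n))"
  have "C = map_mat (zmpoly_eval a) X"
  proof (rule sym, rule eq_matI)
    fix i j assume "i < dim_row C" "j < dim_col C"
    with C have ij: "i < n" "j < n" by auto
    have "map_mat (zmpoly_eval a) X $$ (i, j) = zmpoly_eval a (zmvar (i * n + j))"
      using ij by (simp add: X_def)
    also have "\<dots> = C $$ ((i * n + j) div n, (i * n + j) mod n)"
      by (simp add: a_def)
    also have "\<dots> = C $$ (i, j)"
      using ij by simp
    finally show "map_mat (zmpoly_eval a) X $$ (i, j) = C $$ (i, j)" .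
  qed (use C in \<open>simp_all add: X_def\<close>)
  moreover have "X \<in> carrier_mat n n" by (simp add: X_def)
  ultimately show thesis by (rule that[rotated])
qed

lemma (in comm_ring_hom) char_poly_mat_delete_hom:
  assumes "X \<in> carrier_mat n n"
  shows "char_poly (mat_delete (mat\<^sub>h X) i i) = map_poly hom (char_poly (mat_delete X i i))"
  unfolding map_mat_mat_delete[symmetric] by (rule char_poly_hom[OF mat_delete_carrier[OF assms]])

lemma coeff_sum_char_poly_mat_delete:
  fixes C :: "'a::comm_ring_1 mat"
  assumes C: "C \<in> carrier_mat n n"
  shows "coeff (\<Sum>i<n. char_poly (mat_delete C i i)) k = of_nat (Suc k) * coeff (char_poly C) (Suc k)"
proof -
  obtain X :: "zmpoly mat" and a where X: "X \<in> carrier_mat n n" and C_eq: "C = map_mat (zmpoly_eval a) X"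
    using C by (rule generic_matE)
  interpret ph: map_poly_comm_ring_hom "zmpoly_eval a" ..
  have "coeff (\<Sum>i<n. char_poly (mat_delete C i i)) k
      = zmpoly_eval a (coeff (\<Sum>i<n. char_poly (mat_delete X i i)) k)"
    by (simp add: C_eq zmpoly_eval.char_poly_mat_delete_hom[OF X] ph.hom_sum[symmetric])
  also have "\<dots> = zmpoly_eval a (of_nat (Suc k) * coeff (char_poly X) (Suc k))"
    by (simp only: coeff_sum_char_poly_mat_delete_idom[OF X])
  also have "\<dots> = of_nat (Suc k) * coeff (char_poly C) (Suc k)"
    by (simp add: C_eq zmpoly_eval.char_poly_hom[OF X] hom_distribs)
  finally show ?thesis .
qed

section \<open>Adjugate expansion, Cayley--Hamilton theorem and Newton identities\<close>

definition mat_trace :: "'a::comm_ring_1 mat \<Rightarrow> 'a" where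
  "mat_trace A = (\<Sum>i<dim_row A. A $$ (i, i))"

lemma mat_delete_char_poly_matrix:
  "A \<in> carrier_mat n n \<Longrightarrow> i < n \<Longrightarrow> mat_delete (char_poly_matrix A) i i = char_poly_matrix (mat_delete A i i)"
  unfolding char_poly_matrix_def by (auto simp: mat_delete_def)

lemma pow_mat_Suc_entry:
  assumes "C \<in> carrier_mat n n" "i < n" "j < n"
  shows "(C ^\<^sub>m Suc s) $$ (i, j) = (\<Sum>l<n. (C ^\<^sub>m s) $$ (i, l) * C $$ (l, j))"
  using assms by (simp add: scalar_prod_def atLeast0LessThan)

text \<open>The adjugate Q of the characteristic matrix x I - C, written as a polynomial with matrix
  coefficients Q = \<Sum>k x^k Q_k; the coefficients of Q (x I - C) = p(x) I give the recursion
  Q_k = Q_(k+1) C + c_(k+1) I, which is solved from above.\<close>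
locale square_mat =
  fixes C :: "'a::comm_ring_1 mat" and n :: nat
  assumes C: "C \<in> carrier_mat n n"
begin

abbreviation c :: "nat \<Rightarrow> 'a" where
  "c k \<equiv> coeff (char_poly C) k"

definition adj_coeff :: "nat \<Rightarrow> nat \<Rightarrow> nat \<Rightarrow> 'a" where
  "adj_coeff k i j = coeff (adj_mat (char_poly_matrix C) $$ (i, j)) k"

lemma char_poly_matrix_entry:
  "l < n \<Longrightarrow> j < n \<Longrightarrow> char_poly_matrix C $$ (l, j) = [:- C $$ (l, j), if l = j then 1 else 0:]"
  using C by (auto simp: char_poly_matrix_def)

lemma adj_coeff_eq:
  assumes i: "i < n" and j: "j < n"
  shows "(\<Sum>l<n. (if k = 0 then 0 else (if l = j then 1 else 0) * adj_coeff (k - 1) i l)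
      - adj_coeff k i l * C $$ (l, j)) = (if i = j then c k else 0)"
proof -
  let ?M = "char_poly_matrix C"
  have M: "?M \<in> carrier_mat n n" using C by simp
  have "(if i = j then c k else 0) = coeff ((adj_mat ?M * ?M) $$ (i, j)) k"
    using adj_mat(3)[OF M] i j by (simp add: char_poly_def)
  also have "\<dots> = (\<Sum>l<n. coeff (adj_mat ?M $$ (i, l) * ?M $$ (l, j)) k)"
    using adj_mat(1)[OF M] M i j by (simp add: scalar_prod_def atLeast0LessThan coeff_sum)
  also have "\<dots> = (\<Sum>l<n. (if k = 0 then 0 else (if l = j then 1 else 0) * adj_coeff (k - 1) i l)
      - adj_coeff k i l * C $$ (l, j))"
    by (rule sum.cong[OF refl])
      (use j in \<open>auto simp: char_poly_matrix_entry adj_coeff_def coeff_pCons mult_pCons_right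
        split: nat.split\<close>)
  finally show ?thesis ..
qed

lemma adj_coeff_0_eq:
  "i < n \<Longrightarrow> j < n \<Longrightarrow> - (\<Sum>l<n. adj_coeff 0 i l * C $$ (l, j)) = (if i = j then c 0 else 0)"
  using adj_coeff_eq[of i j 0] by (simp add: sum_negf)

lemma adj_coeff_Suc_eq:
  assumes "i < n" "j < n"
  shows "adj_coeff k i j = (\<Sum>l<n. adj_coeff (Suc k) i l * C $$ (l, j)) + (if i = j then c (Suc k) else 0)"
proof -
  have "(\<Sum>l<n. (if l = j then 1 else 0) * adj_coeff k i l) = adj_coeff k i j"
    using assms by (simp add: if_distrib[of "\<lambda>x. x * _"] cong: if_cong)
  then show ?thesis
    using adj_coeff_eq[OF assms, of "Suc k"] by (simp add: sum_subtractf algebra_simps)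
qed

lemma adj_coeff_eventually_0: "\<exists>N. \<forall>k\<ge>N. \<forall>i<n. \<forall>j<n. adj_coeff k i j = 0"
proof -
  let ?D = "(\<lambda>(i, j). degree (adj_mat (char_poly_matrix C) $$ (i, j))) ` ({..<n} \<times> {..<n})"
  obtain N where N: "\<forall>d\<in>?D. d < N"
    using finite_nat_set_iff_bounded[of ?D] by blast
  have "adj_coeff k i j = 0" if "N \<le> k" "i < n" "j < n" for k i j
  proof -
    have "degree (adj_mat (char_poly_matrix C) $$ (i, j)) < N" using N that by auto
    then show ?thesis using that by (simp add: adj_coeff_def coeff_eq_0)
  qed
  then show ?thesis by blast
qed

lemma sum_c_pow_mult:
  assumes "i < n" "j < n"
  shows "(\<Sum>l<n. (\<Sum>m\<in>{Suc k..n}. c m * (C ^\<^sub>m (m - Suc k)) $$ (i, l)) * C $$ (l, j))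
       = (\<Sum>m\<in>{Suc k..n}. c m * (C ^\<^sub>m (m - k)) $$ (i, j))"
proof -
  have "(\<Sum>l<n. (\<Sum>m\<in>{Suc k..n}. c m * (C ^\<^sub>m (m - Suc k)) $$ (i, l)) * C $$ (l, j))
      = (\<Sum>m\<in>{Suc k..n}. c m * (\<Sum>l<n. (C ^\<^sub>m (m - Suc k)) $$ (i, l) * C $$ (l, j)))"
    by (simp add: sum_distrib_left sum_distrib_right mult.assoc sum.swap[of _ "{..<n}"])
  also have "\<dots> = (\<Sum>m\<in>{Suc k..n}. c m * (C ^\<^sub>m (m - k)) $$ (i, j))"
    by (rule sum.cong[OF refl])
      (simp add: pow_mat_Suc_entry[OF C assms, symmetric] Suc_diff_Suc Suc_le_eq)
  finally show ?thesis .
qed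

definition adj_coeff_formula :: "nat \<Rightarrow> nat \<Rightarrow> nat \<Rightarrow> 'a" where
  "adj_coeff_formula k i j = (\<Sum>m\<in>{Suc k..n}. c m * (C ^\<^sub>m (m - Suc k)) $$ (i, j))"

lemma adj_coeff_formula_Suc_eq:
  assumes ij: "i < n" "j < n"
  shows "adj_coeff_formula k i j
    = (\<Sum>l<n. adj_coeff_formula (Suc k) i l * C $$ (l, j)) + (if i = j then c (Suc k) else 0)"
proof -
  have "(\<Sum>l<n. adj_coeff_formula (Suc k) i l * C $$ (l, j)) + (if i = j then c (Suc k) else 0)
      = (\<Sum>m\<in>{Suc (Suc k)..n}. c m * (C ^\<^sub>m (m - Suc k)) $$ (i, j)) + (if i = j then c (Suc k) else 0)"
    by (simp add: adj_coeff_formula_def sum_c_pow_mult[OF ij])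
  also have "\<dots> = adj_coeff_formula k i j"
  proof (cases "Suc k \<le> n")
    case True
    then have "{Suc k..n} = insert (Suc k) {Suc (Suc k)..n}" by auto
    then show ?thesis using C ij by (simp add: adj_coeff_formula_def)
  next
    case False
    then show ?thesis using degree_monic_char_poly[OF C] by (simp add: adj_coeff_formula_def coeff_eq_0)
  qed
  finally show ?thesis ..
qed

text \<open>Both adj_coeff and its closed form satisfy the same descending recursion and vanish for
  large k.\<close>
lemma adj_coeff_closed:
  assumes "i < n" "j < n"
  shows "adj_coeff k i j = adj_coeff_formula k i j"
proof -
  obtain N where N: "\<forall>k\<ge>N. \<forall>i<n. \<forall>j<n. adj_coeff k i j = 0"
    using adj_coeff_eventually_0 by blast
  define P where "P k \<longleftrightarrow> (\<forall>i<n. \<forall>j<n. adj_coeff k i j = adj_coeff_formula k i j)" for k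
  have base: "P k" if "max N n \<le> k" for k
    using that N by (simp add: P_def adj_coeff_formula_def)
  have step: "P k" if "P (Suc k)" for k
    unfolding P_def
  proof (intro allI impI)
    fix i j assume ij: "i < n" "j < n"
    have "adj_coeff k i j = (\<Sum>l<n. adj_coeff (Suc k) i l * C $$ (l, j)) + (if i = j then c (Suc k) else 0)"
      using ij by (rule adj_coeff_Suc_eq)
    also have "\<dots> = (\<Sum>l<n. adj_coeff_formula (Suc k) i l * C $$ (l, j)) + (if i = j then c (Suc k) else 0)"
      using that ij by (intro arg_cong2[where f = "(+)"] sum.cong) (auto simp: P_def)
    also have "\<dots> = adj_coeff_formula k i j"
      using ij by (rule adj_coeff_formula_Suc_eq[symmetric])
    finally show "adj_coeff k i j = adj_coeff_formula k i j" .
  qed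
  have "P k"
  proof (cases "max N n \<le> k")
    case False
    then have "k \<le> max N n" by linarith
    then show ?thesis by (induction k rule: inc_induct) (auto intro: base step)
  qed (rule base)
  then show ?thesis using assms by (simp add: P_def)
qed

lemma cayley_hamilton_entry:
  assumes "i < n" "j < n"
  shows "c 0 * (if i = j then 1 else 0) + (\<Sum>m\<in>{1..n}. c m * (C ^\<^sub>m m) $$ (i, j)) = 0"
proof -
  have "(\<Sum>l<n. adj_coeff 0 i l * C $$ (l, j))
      = (\<Sum>l<n. (\<Sum>m\<in>{Suc 0..n}. c m * (C ^\<^sub>m (m - Suc 0)) $$ (i, l)) * C $$ (l, j))"
    using assms by (intro sum.cong) (simp_all add: adj_coeff_closed adj_coeff_formula_def)
  also have "\<dots> = (\<Sum>m\<in>{1..n}. c m * (C ^\<^sub>m m) $$ (i, j))"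
    using sum_c_pow_mult[OF assms, of 0] by simp
  finally show ?thesis
    using adj_coeff_0_eq[OF assms] by (auto simp: add_eq_0_iff minus_equation_iff)
qed

lemma trace_adj_coeff: "(\<Sum>i<n. adj_coeff k i i) = of_nat (Suc k) * c (Suc k)"
proof -
  have "adj_mat (char_poly_matrix C) $$ (i, i) = char_poly (mat_delete C i i)" if "i < n" for i
    using C that carrier_matD[OF char_poly_matrix_closed[OF C]]
    by (simp add: adj_mat_def cofactor_def char_poly_def mat_delete_char_poly_matrix power_add)
  then have "(\<Sum>i<n. adj_coeff k i i) = coeff (\<Sum>i<n. char_poly (mat_delete C i i)) k"
    by (simp add: adj_coeff_def coeff_sum)
  then show ?thesis by (simp add: coeff_sum_char_poly_mat_delete[OF C])
qed

lemma newton_identity: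
  assumes k: "k < n"
  shows "of_nat (n - k) * c k = - (\<Sum>i\<in>{1..n - k}. c (k + i) * mat_trace (C ^\<^sub>m i))"
proof (cases k)
  case 0
  have "(\<Sum>j<n. c 0 + (\<Sum>m\<in>{1..n}. c m * (C ^\<^sub>m m) $$ (j, j))) = 0"
    using cayley_hamilton_entry[of j j for j] by (intro sum.neutral) simp
  then show ?thesis
    using C 0 by (simp add: sum.distrib sum.swap[of _ "{..<n}"] sum_distrib_left mat_trace_def
        eq_neg_iff_add_eq_0)
next
  case (Suc k')
  have "of_nat k * c k = (\<Sum>j<n. adj_coeff k' j j)"
    by (simp add: trace_adj_coeff Suc)
  also have "\<dots> = (\<Sum>j<n. \<Sum>m\<in>{k..n}. c m * (C ^\<^sub>m (m - k)) $$ (j, j))"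
    by (intro sum.cong) (simp_all add: adj_coeff_closed adj_coeff_formula_def Suc)
  also have "\<dots> = (\<Sum>m\<in>{k..n}. c m * mat_trace (C ^\<^sub>m (m - k)))"
    using C by (simp add: sum.swap[of _ "{..<n}"] sum_distrib_left mat_trace_def)
  also have "\<dots> = c k * of_nat n + (\<Sum>i\<in>{1..n - k}. c (k + i) * mat_trace (C ^\<^sub>m i))"
  proof -
    have "{k..n} = insert k {Suc k..n}" using k by auto
    moreover have "(\<Sum>m\<in>{Suc k..n}. c m * mat_trace (C ^\<^sub>m (m - k)))
        = (\<Sum>i\<in>{1..n - k}. c (k + i) * mat_trace (C ^\<^sub>m i))"
      by (rule sum.reindex_bij_witness[where i = "\<lambda>i. k + i" and j = "\<lambda>m. m - k"]) auto
    ultimately show ?thesis using C by (simp add: mat_trace_def)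
  qed
  finally show ?thesis
    using k by (simp add: of_nat_diff algebra_simps eq_neg_iff_add_eq_0)
qed

end

section \<open>Matrices over the Grassmann algebra\<close>

lemma sum_fun_apply: "(\<Sum>t\<in>T. f t) x = (\<Sum>t\<in>T. f t x)"
  by (induct T rule: infinite_finite_induct) auto

lemma gmat_sum_apply: "(\<Sum>t\<in>T. f t) i j = (\<Sum>t\<in>T. f t i j :: 'k::comm_ring_1 grass)"
  by (induct T rule: infinite_finite_induct) simp_all

lemma gfinite_mmul: "gfinite (mmul n X Y i j)"
  unfolding mmul_def by (rule supported_on_sum) (simp add: gfinite_gmul)

lemma mmul_assoc: "mmul n (mmul n X Y) Z = mmul n X (mmul n Y (Z :: 'k::comm_ring_1 gmat))"
proof (rule ext, rule ext)
  fix i j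
  have "mmul n (mmul n X Y) Z i j = (\<Sum>l<n. \<Sum>m<n. gmul (gmul (X i m) (Y m l)) (Z l j))"
    by (simp add: mmul_def gmul_sum_left)
  also have "\<dots> = (\<Sum>m<n. \<Sum>l<n. gmul (X i m) (gmul (Y m l) (Z l j)))"
    by (subst sum.swap) (simp add: gmul_assoc)
  also have "\<dots> = mmul n X (mmul n Y Z) i j"
    by (simp add: mmul_def gmul_sum_right)
  finally show "mmul n (mmul n X Y) Z i j = mmul n X (mmul n Y Z) i j" .
qed

lemma mmul_sum_left: "mmul n (\<Sum>t\<in>T. Z t) Y = (\<Sum>t\<in>T. mmul n (Z t) (Y :: 'k::comm_ring_1 gmat))"
  by (intro ext) (simp add: mmul_def gmat_sum_apply gmul_sum_left sum.swap[of _ T])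

lemma mmul_mone_right:
  assumes "j < n" "gfinite (X i j)"
  shows "mmul n X mone i j = (X i j :: 'k::comm_ring_1 grass)"
proof -
  have "mmul n X mone i j = (\<Sum>l<n. if l = j then gmul (X i l) gone else 0)"
    unfolding mmul_def by (rule sum.cong) (auto simp: mone_def)
  also have "\<dots> = X i j"
    using assms by (simp add: gmul_commute_even[OF geven_gone, symmetric] gmul_gone_left)
  finally show ?thesis .
qed

definition re_poly :: "'k::comm_ring_1 grass_dual poly \<Rightarrow> 'k gpoly" where
  "re_poly q = (\<lambda>k. dual_re (coeff q k))"

lemma re_poly_mult: "re_poly (p * q) = pmul (re_poly p) (re_poly q)"
  by (rule ext) (simp add: re_poly_def pmul_def coeff_mult dual_re_sum)

lemma re_poly_prod_list:
  "re_poly (prod_list (map f xs)) = foldr (\<lambda>i acc. pmul (re_poly (f i)) acc) xs pone"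
  by (induct xs) (simp_all add: re_poly_mult, simp add: re_poly_def pone_def fun_eq_iff)

lemma re_poly_prod_upt:
  "re_poly (\<Prod>i = 0..<n. f i) = foldr (\<lambda>i acc. pmul (re_poly (f i)) acc) [0..<n] pone"
  using re_poly_prod_list[of f "[0..<n]"] by (simp add: prod.distinct_set_conv_list[symmetric])

lemma sum_triangle_reindex:
  fixes f :: "nat \<Rightarrow> nat \<Rightarrow> nat \<Rightarrow> 'a::comm_monoid_add"
  assumes "N \<ge> 1"
  shows "(\<Sum>i\<in>{1..N}. \<Sum>t<i. f i (i - 1 - t) t) = (\<Sum>(r, s)\<in>{(r, s). r + s \<le> N - 1}. f (r + s + 1) r s)"
proof -
  have "(\<Sum>i\<in>{1..N}. \<Sum>t<i. f i (i - 1 - t) t) = (\<Sum>(i, t)\<in>(SIGMA i:{1..N}. {..<i}). f i (i - 1 - t) t)"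
    by (rule sum.Sigma) auto
  also have "\<dots> = (\<Sum>(r, s)\<in>{(r, s). r + s \<le> N - 1}. f (r + s + 1) r s)"
    by (rule sum.reindex_bij_witness[where i = "\<lambda>(r, s). (r + s + 1, s)"
          and j = "\<lambda>(i, t). (i - 1 - t, t)"])
      (use assms in auto)
  finally show ?thesis .
qed

locale grass_dual_mat =
  fixes n :: nat and A B :: "'k::comm_ring_1 gmat"
  assumes A_even: "\<And>i j. i < n \<Longrightarrow> j < n \<Longrightarrow> geven (A i j)"
    and B_finite: "\<And>i j. i < n \<Longrightarrow> j < n \<Longrightarrow> gfinite (B i j)"
begin

definition C :: "'k grass_dual mat" where
  "C = mat n n (\<lambda>(i, j). Dual (A i j) (B i j))"

lemma C_carrier: "C \<in> carrier_mat n n"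
  by (simp add: C_def)

lemma dual_re_C: "i < n \<Longrightarrow> j < n \<Longrightarrow> dual_re (C $$ (i, j)) = A i j"
  and dual_eps_C: "i < n \<Longrightarrow> j < n \<Longrightarrow> dual_eps (C $$ (i, j)) = B i j"
  by (simp_all add: C_def A_even B_finite)

sublocale square_mat C n
  by unfold_locales (rule C_carrier)

definition pow_deriv :: "nat \<Rightarrow> 'k gmat" where
  "pow_deriv s = (\<Sum>t<s. mmul n (mmul n (mpow n A (s - 1 - t)) B) (mpow n A t))"

lemma pow_deriv_Suc:
  assumes "j < n"
  shows "pow_deriv (Suc s) i j = mmul n (mpow n A s) B i j + mmul n (pow_deriv s) A i j"
proof -
  have "pow_deriv (Suc s) i j = mmul n (mmul n (mpow n A s) B) mone i j
      + (\<Sum>t<s. mmul n (mmul n (mpow n A (s - Suc t)) B) (mpow n A (Suc t)) i j)"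
    unfolding pow_deriv_def gmat_sum_apply by (subst sum.lessThan_Suc_shift) simp
  also have "mmul n (mmul n (mpow n A s) B) mone i j = mmul n (mpow n A s) B i j"
    by (rule mmul_mone_right[OF assms gfinite_mmul])
  also have "(\<Sum>t<s. mmul n (mmul n (mpow n A (s - Suc t)) B) (mpow n A (Suc t)) i j)
      = (\<Sum>t<s. mmul n (mmul n (mmul n (mpow n A (s - 1 - t)) B) (mpow n A t)) A) i j"
    by (simp add: gmat_sum_apply mmul_assoc)
  also have "\<dots> = mmul n (pow_deriv s) A i j"
    by (simp add: pow_deriv_def mmul_sum_left)
  finally show ?thesis .
qed

lemma pow_C_entry:
  assumes "i < n" "j < n"
  shows "dual_re ((C ^\<^sub>m s) $$ (i, j)) = mpow n A s i j
    \<and> dual_eps ((C ^\<^sub>m s) $$ (i, j)) = pow_deriv s i j"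
  using assms
proof (induct s arbitrary: j)
  case 0
  then show ?case using C_carrier by (simp add: mone_def pow_deriv_def zero_fun_def)
next
  case (Suc s)
  have e: "(C ^\<^sub>m Suc s) $$ (i, j) = (\<Sum>l<n. (C ^\<^sub>m s) $$ (i, l) * C $$ (l, j))"
    using Suc.prems by (rule pow_mat_Suc_entry[OF C_carrier])
  have "dual_eps ((C ^\<^sub>m s) $$ (i, l) * C $$ (l, j))
      = gmul (mpow n A s i l) (B l j) + gmul (pow_deriv s i l) (A l j)" if "l < n" for l
    using Suc that gmul_commute_even[OF A_even[OF that \<open>j < n\<close>], of "pow_deriv s i l"]
    by (simp add: dual_re_C dual_eps_C)
  then have "dual_eps ((C ^\<^sub>m Suc s) $$ (i, j)) = pow_deriv (Suc s) i j"
    using Suc.prems unfolding e by (simp add: dual_eps_sum pow_deriv_Suc mmul_def sum.distrib)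
  moreover have "dual_re ((C ^\<^sub>m Suc s) $$ (i, j)) = mpow n A (Suc s) i j"
    using Suc unfolding e by (simp add: dual_re_sum dual_re_C mmul_def)
  ultimately show ?case by simp
qed

lemma trace_pow_C:
  "dual_re (mat_trace (C ^\<^sub>m s)) = mtrace n (mpow n A s)"
  "dual_eps (mat_trace (C ^\<^sub>m s))
    = (\<Sum>t<s. mtrace n (mmul n (mmul n (mpow n A (s - 1 - t)) B) (mpow n A t)))"
proof -
  have dim: "dim_row (C ^\<^sub>m s) = n" using pow_carrier_mat[OF C_carrier] by (rule carrier_matD)
  show "dual_re (mat_trace (C ^\<^sub>m s)) = mtrace n (mpow n A s)"
    unfolding mat_trace_def mtrace_def dim dual_re_sum by (rule sum.cong) (simp_all add: pow_C_entry)
  have "dual_eps (mat_trace (C ^\<^sub>m s)) = (\<Sum>i<n. pow_deriv s i i)"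
    unfolding mat_trace_def dim dual_eps_sum by (rule sum.cong) (simp_all add: pow_C_entry)
  then show "dual_eps (mat_trace (C ^\<^sub>m s))
      = (\<Sum>t<s. mtrace n (mmul n (mmul n (mpow n A (s - 1 - t)) B) (mpow n A t)))"
    by (simp add: pow_deriv_def gmat_sum_apply mtrace_def sum.swap[of _ "{..<n}"])
qed

lemma re_poly_char_poly_matrix_entry:
  "i < n \<Longrightarrow> j < n \<Longrightarrow> re_poly (char_poly_matrix C $$ (i, j)) = xIminus A i j"
  by (rule ext) (simp add: re_poly_def char_poly_matrix_entry xIminus_def coeff_pCons dual_re_C
      split: nat.split)

lemma dual_re_char_poly_coeff: "dual_re (c k) = charpoly n A k"
proof -
  let ?M = "char_poly_matrix C"
  have "char_poly C = (\<Sum>p | p permutes {0..<n}. signof p * (\<Prod>i = 0..<n. ?M $$ (i, p i)))"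
    unfolding char_poly_def by (rule det_def'[OF char_poly_matrix_closed[OF C_carrier]])
  then have "dual_re (c k) = (\<Sum>p | p permutes {0..<n}.
      gscale (of_int (sign p)) (re_poly (\<Prod>i = 0..<n. ?M $$ (i, p i)) k))"
    by (simp add: coeff_sum dual_re_sum of_int_poly dual_re_of_int gmul_gscale_left gmul_gone_left
        gfinite_dual_re re_poly_def)
  also have "\<dots> = (\<Sum>p | p permutes {0..<n}. gscale (of_int (sign p))
      (foldr (\<lambda>i acc. pmul (xIminus A i (p i)) acc) [0..<n] pone k))"
  proof (rule sum.cong[OF refl])
    fix p assume "p \<in> {p. p permutes {0..<n}}"
    then have "p i < n" if "i < n" for i
      using that permutes_in_image by fastforce
    then have "foldr (\<lambda>i acc. pmul (re_poly (?M $$ (i, p i))) acc) [0..<n] pone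
        = foldr (\<lambda>i acc. pmul (xIminus A i (p i)) acc) [0..<n] pone"
      by (intro foldr_cong) (simp_all add: re_poly_char_poly_matrix_entry)
    then show "gscale (of_int (sign p)) (re_poly (\<Prod>i = 0..<n. ?M $$ (i, p i)) k)
        = gscale (of_int (sign p)) (foldr (\<lambda>i acc. pmul (xIminus A i (p i)) acc) [0..<n] pone k)"
      by (simp add: re_poly_prod_upt)
  qed
  also have "\<dots> = charpoly n A k"
    by (simp add: charpoly_def sum_fun_apply atLeast0LessThan)
  finally show ?thesis .
qed

lemma dual_eps_char_poly_newton:
  assumes k: "k < n"
  shows "gscale (of_nat (n - k)) (dual_eps (c k)) =
    - (\<Sum>i\<in>{1..n - k}. gmul (dual_eps (c (k + i))) (mtrace n (mpow n A i)))
    - (\<Sum>(r, s)\<in>{(r, s). r + s \<le> n - k - 1}.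
        gmul (charpoly n A (k + r + s + 1)) (mtrace n (mmul n (mmul n (mpow n A r) B) (mpow n A s))))"
proof -
  have "gscale (of_nat (n - k)) (dual_eps (c k)) = dual_eps (of_nat (n - k) * c k)"
    by (rule dual_eps_of_int_mult[of "int (n - k)", unfolded of_int_of_nat_eq, symmetric])
  also have "\<dots> = - (\<Sum>i\<in>{1..n - k}. dual_eps (c (k + i) * mat_trace (C ^\<^sub>m i)))"
    using newton_identity[OF k] by (simp add: dual_eps_sum)
  also have "\<dots> = - (\<Sum>i\<in>{1..n - k}. gmul (dual_eps (c (k + i))) (mtrace n (mpow n A i))
      + gmul (charpoly n A (k + i))
          (\<Sum>t<i. mtrace n (mmul n (mmul n (mpow n A (i - 1 - t)) B) (mpow n A t))))"
  proof -
    have "gmul (mtrace n (mpow n A i)) (dual_eps (c j))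
        = gmul (dual_eps (c j)) (mtrace n (mpow n A i))" for i j
      using gmul_commute_even[OF geven_dual_re, of "mat_trace (C ^\<^sub>m i)"] by (simp add: trace_pow_C)
    then show ?thesis by (simp add: trace_pow_C dual_re_char_poly_coeff add.commute)
  qed
  also have "\<dots> = - (\<Sum>i\<in>{1..n - k}. gmul (dual_eps (c (k + i))) (mtrace n (mpow n A i)))
    - (\<Sum>(r, s)\<in>{(r, s). r + s \<le> n - k - 1}.
        gmul (charpoly n A (k + r + s + 1)) (mtrace n (mmul n (mmul n (mpow n A r) B) (mpow n A s))))"
    using k sum_triangle_reindex[of "n - k"
        "\<lambda>i r s. gmul (charpoly n A (k + i)) (mtrace n (mmul n (mmul n (mpow n A r) B) (mpow n A s)))"]
    by (simp add: sum.distrib gmul_sum_right add.assoc)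
  finally show ?thesis .
qed

lemma dual_eps_cayley_hamilton:
  assumes ij: "i < n" "j < n"
  shows "gmul (dual_eps (c 0)) (mone i j)
    + (\<Sum>k\<in>{1..n}. gmul (dual_eps (c k)) (mpow n A k i j) + gmul (charpoly n A k) (pow_deriv k i j)) = 0"
proof -
  have "dual_eps (c 0 * (if i = j then 1 else 0) + (\<Sum>k\<in>{1..n}. c k * (C ^\<^sub>m k) $$ (i, j))) = 0"
    by (simp only: cayley_hamilton_entry[OF ij]) simp
  moreover have "dual_eps (c k * (C ^\<^sub>m k) $$ (i, j))
      = gmul (dual_eps (c k)) (mpow n A k i j) + gmul (charpoly n A k) (pow_deriv k i j)" for k
    using pow_C_entry[OF ij, of k] gmul_commute_even[OF geven_dual_re, of "(C ^\<^sub>m k) $$ (i, j)"]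
    by (simp add: dual_re_char_poly_coeff add.commute)
  moreover have "dual_eps (c 0 * (if i = j then 1 else 0)) = gmul (dual_eps (c 0)) (mone i j)"
    using gmul_commute_even[OF geven_gone, of "dual_eps (c 0)"] by (simp add: mone_def)
  ultimately show ?thesis by (simp add: dual_eps_sum)
qed

end

lemma descending_recursion_unique:
  fixes n :: nat
  assumes "k \<le> n" and "f n = g n"
    and "\<And>k. k < n \<Longrightarrow> f k = F k f" "\<And>k. k < n \<Longrightarrow> g k = F k g"
    and local: "\<And>k h h'. k < n \<Longrightarrow> (\<And>i. k < i \<Longrightarrow> i \<le> n \<Longrightarrow> h i = h' i) \<Longrightarrow> F k h = F k h'"
  shows "f k = g k"
  using assms(1)
proof (induction "n - k" arbitrary: k rule: less_induct)
  case less
  show ?case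
  proof (cases "k = n")
    case False
    with less.prems have "k < n" by simp
    with less.hyps have "F k f = F k g" by (intro local) auto
    with \<open>k < n\<close> assms(3,4) show ?thesis by simp
  qed (use assms(2) in simp)
qed

lemma gscale_eq_divide:
  fixes x :: "'k::field grass"
  assumes "m \<noteq> 0" "gscale m x = - p - q"
  shows "x = gscale (- 1 / m) p + gscale (- 1 / m) q"
proof
  fix S
  have "m * x S = - p S - q S" using fun_cong[OF assms(2), of S] by (simp add: gscale_def)
  then show "x S = (gscale (- 1 / m) p + gscale (- 1 / m) q) S"
    using assms(1) by (simp add: gscale_def field_simps)
qed

theorem theorem2p1:
  fixes n :: nat
    and A B :: "'k::field_char_0 gmat"
    and beta :: "nat \<Rightarrow> 'k grass"
  assumes n: "n \<ge> 1"
    and A: "\<forall>i<n. \<forall>j<n. A i j \<in> Grass0"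
    and B: "\<forall>i<n. \<forall>j<n. B i j \<in> Grass1"
    and beta_n: "beta n = 0"
    and beta_rec: "\<forall>k<n. beta k =
        gscale (- 1 / of_nat (n - k))
          (\<Sum>i\<in>{1..n - k}. gmul (beta (k + i)) (mtrace n (mpow n A i)))
      + gscale (- 1 / of_nat (n - k))
          (\<Sum>(r, s)\<in>{(r, s). r + s \<le> n - k - 1}.
             gmul (charpoly n A (k + r + s + 1)) (mtrace n (mmul n (mmul n (mpow n A r) B) (mpow n A s))))"
  shows "\<forall>i<n. \<forall>j<n.
    (msmul (beta 0) mone
     + (\<Sum>k\<in>{1..n}. msmul (beta k) (mpow n A k)
          + msmul (charpoly n A k)
              (\<Sum>t<k. mmul n (mmul n (mpow n A (k - 1 - t)) B) (mpow n A t)))) i j = 0"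
proof -
  interpret grass_dual_mat n A B
    using A B by unfold_locales (auto simp: Grass0_def Grass1_def Grass_def supported_on_def)
  define R where "R k f = gscale (- 1 / of_nat (n - k))
          (\<Sum>i\<in>{1..n - k}. gmul (f (k + i)) (mtrace n (mpow n A i)))
      + gscale (- 1 / of_nat (n - k))
          (\<Sum>(r, s)\<in>{(r, s). r + s \<le> n - k - 1}.
             gmul (charpoly n A (k + r + s + 1)) (mtrace n (mmul n (mmul n (mpow n A r) B) (mpow n A s))))"
    for k and f :: "nat \<Rightarrow> 'k grass"
  have rec_beta: "beta k = R k beta" if "k < n" for k
    unfolding R_def using beta_rec that by blast
  have rec_eps: "dual_eps (c k) = R k (\<lambda>k. dual_eps (c k))" if "k < n" for k
    unfolding R_def using that by (intro gscale_eq_divide dual_eps_char_poly_newton) simp_all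
  have R_local: "R k f = R k g" if "\<And>i. k < i \<Longrightarrow> i \<le> n \<Longrightarrow> f i = g i" for k f g
    unfolding R_def using that
    by (intro arg_cong2[where f = "(+)"] arg_cong[where f = "gscale _"] sum.cong) auto
  have "beta n = dual_eps (c n)"
    using beta_n degree_monic_char_poly[OF C_carrier] by simp
  from descending_recursion_unique[OF _ this rec_beta rec_eps R_local]
  have "beta k = dual_eps (c k)" if "k \<le> n" for k
    using that by blast
  then show ?thesis
    using dual_eps_cayley_hamilton
    by (simp add: msmul_def gmat_sum_apply pow_deriv_def)
qed

end
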